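(* Let $X$ be an extensible marked Dynkin diagram with $d$ nodes, let $n\ge d$ with $\det(X_n)\ne0$, let $R=\mathbb Z/\det(X_n)\mathbb Z$, and let $b_1,\dots,b_n\in R$ be such that $(-\Delta)\,\omega_i^{(n)}\equiv b_i\,\overline{\omega}_1^{(n)}\pmod{Q(X_n)}$ for $i=1,\dots,n$. Put $b=(b_1,\dots,b_n)^T\in R^n$ and let $A=C(X_n)$, viewed as a matrix over $R$. Then: (i) $A^Tb=0$ in $R^n$; (ii) if $x\in R^n$ satisfies $A^Tx=0$, then $x$ is a multiple of $b$; (iii) $b$ is the unique element of $R^n$ such that $A^Tb=0$ and $b_n=-\Delta+\det(X_n)\mathbb Z$.
   Context: A marked Dynkin diagram $X$ has nodes $1,\dots,d$ with node $d$ distinguished and symmetrizable generalized Cartan matrix $C(X)$. For $n\ge d$, $X_n$ is obtained by attaching a simply-laced chain of new nodes $d+1,\dots,n$ to node $d$ (so $C(X_n)$ has $C(X)$ as upper-left block, $2$ on the remaining diagonal, $-1$ in positions $(i,i+1),(i+1,i)$ for $d\le i<n$, $0$ elsewhere). $\det(Y)$ is the determinant of the generalized Cartan matrix of $Y$. The sequence $\det(X_n)$, $n\ge d$, is arithmetic with common difference $\Delta$; $X$ is extensible if $\Delta\ne0$, $\det(X)\ne0$ and $\gcd(\Delta,\det X)=1$. For $\mathfrak g(X_n)$: simple roots $\alpha_i^{(n)}$, coroots $\check\alpha_i^{(n)}$ with $\alpha_j^{(n)}(\check\alpha_i^{(n)})=C(X_n)_{ij}$, root lattice $Q(X_n)$,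 weight lattice $P(X_n)$, fundamental weights $\omega_i^{(n)}$ with $\omega_i^{(n)}(\check\alpha_j^{(n)})=\delta_{ij}$, $\overline{\omega}_1^{(n)}=\omega_n^{(n)}$. When $\det(X_n)\ne0$, $P(X_n)/Q(X_n)$ is cyclic of order $|\det(X_n)|$ generated by $[\overline{\omega}_1^{(n)}]$, so multiplying $\overline{\omega}_1^{(n)}$ by an element of $R$ is well defined modulo $Q(X_n)$. *)

theory Defs
  imports "Jordan_Normal_Form.Determinant" "HOL-Number_Theory.Cong"
begin

text \<open>Nodes 1..n of the paper are indices 0..n-1 here. A marked Dynkin diagram X with d nodes
is given by its d x d integer generalized Cartan matrix C; the distinguished node d is index d-1.\<close>

definition is_gcm :: "nat \<Rightarrow> int mat \<Rightarrow> bool" where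
  "is_gcm d C \<longleftrightarrow> C \<in> carrier_mat d d \<and>
     (\<forall>i<d. C $$ (i,i) = 2) \<and>
     (\<forall>i<d. \<forall>j<d. i \<noteq> j \<longrightarrow> C $$ (i,j) \<le> 0) \<and>
     (\<forall>i<d. \<forall>j<d. C $$ (i,j) = 0 \<longleftrightarrow> C $$ (j,i) = 0)"

definition symmetrizable :: "nat \<Rightarrow> int mat \<Rightarrow> bool" where
  "symmetrizable d C \<longleftrightarrow> (\<exists>\<epsilon> :: nat \<Rightarrow> rat. (\<forall>i<d. \<epsilon> i > 0) \<and>
     (\<forall>i<d. \<forall>j<d. \<epsilon> i * of_int (C $$ (i,j)) = \<epsilon> j * of_int (C $$ (j,i))))"

definition marked_dynkin :: "nat \<Rightarrow> int mat \<Rightarrow> bool" where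
  "marked_dynkin d C \<longleftrightarrow> d \<ge> 1 \<and> is_gcm d C \<and> symmetrizable d C"

text \<open>C(X_n): C(X) as upper-left block, a simply-laced chain of nodes d+1..n attached to node d.\<close>
definition cartan_ext :: "nat \<Rightarrow> int mat \<Rightarrow> nat \<Rightarrow> int mat" where
  "cartan_ext d C n = mat n n (\<lambda>(i,j).
      if i < d \<and> j < d then C $$ (i,j)
      else if i = j then 2
      else if (j = i + 1 \<or> i = j + 1) \<and> min i j \<ge> d - 1 then -1
      else 0)"

definition det_ext :: "nat \<Rightarrow> int mat \<Rightarrow> nat \<Rightarrow> int" where
  "det_ext d C n = det (cartan_ext d C n)"

text \<open>Common difference of the arithmetic sequence det(X_n), n \<ge> d.\<close>
definition Delta :: "nat \<Rightarrow> int mat \<Rightarrow> int" where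
  "Delta d C = det_ext d C (d + 1) - det_ext d C d"

definition extensible :: "nat \<Rightarrow> int mat \<Rightarrow> bool" where
  "extensible d C \<longleftrightarrow> Delta d C \<noteq> 0 \<and> det C \<noteq> 0 \<and> coprime (Delta d C) (det C)"

text \<open>Weights of g(X_n) (det(X_n) \<noteq> 0) in coordinates w.r.t. the fundamental weights:
  \<lambda> \<mapsto> (\<lambda>(coroot_i))_i identifies P(X_n) with Z^n. Then omega_i is the i-th unit vector
  and alpha_j = \<Sum>_i C_ij omega_i is the j-th column of C(X_n).\<close>
definition fund_weight :: "nat \<Rightarrow> nat \<Rightarrow> int vec" where
  "fund_weight n i = unit_vec n i"

definition simple_root :: "nat \<Rightarrow> int mat \<Rightarrow> nat \<Rightarrow> nat \<Rightarrow> int vec" where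
  "simple_root d C n j = col (cartan_ext d C n) j"

definition root_lattice :: "nat \<Rightarrow> int mat \<Rightarrow> nat \<Rightarrow> int vec set" where
  "root_lattice d C n = {finsum_vec TYPE(int) n (\<lambda>j. of_int (c j) \<cdot>\<^sub>v simple_root d C n j) {0..<n} | c. True}"

definition cong_Q :: "nat \<Rightarrow> int mat \<Rightarrow> nat \<Rightarrow> int vec \<Rightarrow> int vec \<Rightarrow> bool" where
  "cong_Q d C n x y \<longleftrightarrow> x - y \<in> root_lattice d C n"

end

theory Submission
  imports Defs
begin

text \<open>Write \<open>A = C(X\<^sub>n)\<close> and \<open>m = det A\<close>. An integer vector \<open>w\<close> with \<open>A\<^sup>T w \<equiv> 0 (mod m)\<close> pairs to
  zero modulo \<open>m\<close> with every element of the root lattice, so the hypothesis on \<open>b\<close> yields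
  \<open>\<Delta> w\<^sub>i + b\<^sub>i w\<^sub>n \<equiv> 0 (mod m)\<close> for all \<open>i\<close>. Since \<open>det(X\<^sub>n) = det X + (n - d) \<Delta>\<close>, \<open>\<Delta>\<close> is a unit
  modulo \<open>m\<close>, so such a \<open>w\<close> is determined by \<open>w\<^sub>n\<close>. The last row of \<open>adj A\<close> is one such \<open>w\<close>, with
  last entry \<open>det(X\<^sub>n\<^sub>-\<^sub>1) = m - \<Delta>\<close>; the relation then forces \<open>b\<close> to agree with it modulo \<open>m\<close>.\<close>

definition left_kernel_mod :: "int \<Rightarrow> int mat \<Rightarrow> int vec \<Rightarrow> bool" where
  "left_kernel_mod m A w \<longleftrightarrow> (\<forall>j<dim_col A. [(transpose_mat A *\<^sub>v w) $ j = 0] (mod m))"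

lemma left_kernel_mod_adj_row:
  assumes A: "A \<in> carrier_mat n n" and l: "l < n"
  shows "left_kernel_mod (det A) A (row (adj_mat A) l)"
  unfolding left_kernel_mod_def
proof (intro allI impI)
  fix j assume "j < dim_col A"
  with A have j: "j < n" by simp
  have adj: "adj_mat A \<in> carrier_mat n n" by (rule adj_mat(1)[OF A])
  have "(transpose_mat A *\<^sub>v row (adj_mat A) l) $ j = row (adj_mat A) l \<bullet> col A j"
    using A adj j l by (simp add: comm_scalar_prod[of _ n])
  also have "\<dots> = (adj_mat A * A) $$ (l, j)"
    using A adj j l by simp
  also have "\<dots> = (if l = j then det A else 0)"
    using adj_mat(3)[OF A] j l by simp
  finally show "[(transpose_mat A *\<^sub>v row (adj_mat A) l) $ j = 0] (mod det A)"
    by (simp add: cong_0_iff)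
qed

lemma left_kernel_mod_cong:
  assumes w: "w \<in> carrier_vec (dim_row A)" and w': "w' \<in> carrier_vec (dim_row A)"
    and cong: "\<And>i. i < dim_row A \<Longrightarrow> [w $ i = w' $ i] (mod m)"
    and ker: "left_kernel_mod m A w"
  shows "left_kernel_mod m A w'"
  unfolding left_kernel_mod_def
proof (intro allI impI)
  fix j assume j: "j < dim_col A"
  have "[col A j \<bullet> w' = col A j \<bullet> w] (mod m)"
    unfolding scalar_prod_def using w w'
  proof (simp, intro cong_sum cong_scalar_left)
    fix i assume "i \<in> {0..<dim_row A}"
    then show "[w' $ i = w $ i] (mod m)" using cong by (simp add: cong_sym_eq)
  qed
  moreover have "[col A j \<bullet> w = 0] (mod m)"
    using ker j by (simp add: left_kernel_mod_def)
  ultimately show "[(transpose_mat A *\<^sub>v w') $ j = 0] (mod m)"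
    using j by (simp add: cong_trans)
qed

lemma left_kernel_mod_orthogonal:
  assumes A: "A \<in> carrier_mat nr nc" and w: "w \<in> carrier_vec nr" and c: "c \<in> carrier_vec nc"
    and ker: "left_kernel_mod m A w"
  shows "[w \<bullet> (A *\<^sub>v c) = 0] (mod m)"
proof -
  have "w \<bullet> (A *\<^sub>v c) = (\<Sum>j\<in>{0..<nc}. (transpose_mat A *\<^sub>v w) $ j * c $ j)"
    using transpose_vec_mult_scalar[OF A c w] c by (simp add: scalar_prod_def)
  also have "[\<dots> = (\<Sum>j\<in>{0..<nc}. 0 * c $ j)] (mod m)"
  proof (intro cong_sum cong_scalar_right)
    fix j assume "j \<in> {0..<nc}"
    then show "[(transpose_mat A *\<^sub>v w) $ j = 0] (mod m)"
      using ker A by (simp add: left_kernel_mod_def)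
  qed
  finally show ?thesis by simp
qed

lemma finsum_vec_smult_col:
  fixes A :: "'a :: comm_semiring_1 mat"
  assumes A: "A \<in> carrier_mat nr nc"
  shows "finsum_vec TYPE('a) nr (\<lambda>j. c j \<cdot>\<^sub>v col A j) {0..<nc} = A *\<^sub>v vec nc c"
proof (rule eq_vecI)
  have cols: "(\<lambda>j. c j \<cdot>\<^sub>v col A j) \<in> {0..<nc} \<rightarrow> carrier_vec nr"
    using A by auto
  then show "dim_vec (finsum_vec TYPE('a) nr (\<lambda>j. c j \<cdot>\<^sub>v col A j) {0..<nc}) = dim_vec (A *\<^sub>v vec nc c)"
    using A finsum_vec_closed[OF cols] by simp
  fix i assume "i < dim_vec (A *\<^sub>v vec nc c)"
  with A have i: "i < nr" by simp
  show "finsum_vec TYPE('a) nr (\<lambda>j. c j \<cdot>\<^sub>v col A j) {0..<nc} $ i = (A *\<^sub>v vec nc c) $ i"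
    using A i by (simp add: index_finsum_vec[OF _ i cols] scalar_prod_def mult.commute)
qed

text \<open>Weights are written in fundamental-weight coordinates, so the root lattice is \<open>A \<int>\<^sup>n\<close> and
  \<open>weight_relation\<close> says \<open>-\<Delta> \<omega>\<^sub>i \<equiv> b\<^sub>i \<omega>\<^sub>l (mod Q)\<close>.\<close>

locale cyclic_weight_lattice =
  fixes A :: "int mat" and n l :: nat and \<Delta> :: int and b :: "int vec"
  assumes A: "A \<in> carrier_mat n n" and l: "l < n"
    and coprime_det_Delta: "coprime (det A) \<Delta>"
    and adj_diag: "[adj_mat A $$ (l, l) = - \<Delta>] (mod det A)"
    and b: "b \<in> carrier_vec n"
    and weight_relation:
      "\<And>i. i < n \<Longrightarrow> (- \<Delta>) \<cdot>\<^sub>v unit_vec n i - b $ i \<cdot>\<^sub>v unit_vec n l \<in> (*\<^sub>v) A ` carrier_vec n"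
begin

lemma left_kernel_relation:
  assumes w: "w \<in> carrier_vec n" and ker: "left_kernel_mod (det A) A w" and i: "i < n"
  shows "[\<Delta> * w $ i + b $ i * w $ l = 0] (mod det A)"
proof -
  obtain c where c: "c \<in> carrier_vec n"
    and eq: "(- \<Delta>) \<cdot>\<^sub>v unit_vec n i - b $ i \<cdot>\<^sub>v unit_vec n l = A *\<^sub>v c"
    using weight_relation[OF i] by auto
  have "[w \<bullet> ((- \<Delta>) \<cdot>\<^sub>v unit_vec n i - b $ i \<cdot>\<^sub>v unit_vec n l) = 0] (mod det A)"
    unfolding eq by (rule left_kernel_mod_orthogonal[OF A w c ker])
  moreover have "w \<bullet> ((- \<Delta>) \<cdot>\<^sub>v unit_vec n i - b $ i \<cdot>\<^sub>v unit_vec n l) = - (\<Delta> * w $ i + b $ i * w $ l)"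
    using w i l by (simp add: scalar_prod_minus_distrib[of _ n] algebra_simps)
  ultimately show ?thesis by (simp only: cong_0_iff dvd_minus_iff)
qed

lemma cancel_Delta: "[\<Delta> * x = \<Delta> * y] (mod det A) \<Longrightarrow> [x = y] (mod det A)"
  using cong_mult_lcancel[of \<Delta> "det A" x y] coprime_det_Delta by (simp add: coprime_commute)

lemma b_cong_adj_row:
  assumes i: "i < n"
  shows "[b $ i = adj_mat A $$ (l, i)] (mod det A)"
proof (rule cancel_Delta)
  let ?N = "adj_mat A"
  have "det A dvd \<Delta> * ?N $$ (l, i) + b $ i * ?N $$ (l, l)"
    using left_kernel_relation[OF _ left_kernel_mod_adj_row[OF A l] i] adj_mat(1)[OF A] i l
    by (simp add: cong_0_iff)
  moreover have "det A dvd ?N $$ (l, l) + \<Delta>"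
    using adj_diag by (simp add: cong_iff_dvd_diff)
  ultimately have "det A dvd b $ i * (?N $$ (l, l) + \<Delta>) - (\<Delta> * ?N $$ (l, i) + b $ i * ?N $$ (l, l))"
    by (intro dvd_diff dvd_mult)
  also have "\<dots> = \<Delta> * b $ i - \<Delta> * ?N $$ (l, i)"
    by (simp add: algebra_simps)
  finally show "[\<Delta> * b $ i = \<Delta> * ?N $$ (l, i)] (mod det A)"
    by (simp add: cong_iff_dvd_diff)
qed

lemma left_kernel_b: "left_kernel_mod (det A) A b"
proof (rule left_kernel_mod_cong)
  show "row (adj_mat A) l \<in> carrier_vec (dim_row A)" "b \<in> carrier_vec (dim_row A)"
    using adj_mat(1)[OF A] A b by auto
  show "[row (adj_mat A) l $ i = b $ i] (mod det A)" if "i < dim_row A" for i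
    using b_cong_adj_row[of i] adj_mat(1)[OF A] A that l by (simp add: cong_sym_eq)
  show "left_kernel_mod (det A) A (row (adj_mat A) l)"
    by (rule left_kernel_mod_adj_row[OF A l])
qed

lemma b_last: "[b $ l = - \<Delta>] (mod det A)"
  using b_cong_adj_row[OF l] adj_diag by (rule cong_trans)

lemma left_kernel_multiple:
  assumes x: "x \<in> carrier_vec n" and ker: "left_kernel_mod (det A) A x"
  shows "\<exists>c. \<forall>i<n. [x $ i = c * b $ i] (mod det A)"
proof -
  obtain u where "[\<Delta> * u = 1] (mod det A)"
    using coprime_det_Delta cong_solve_coprime_int by (auto simp: coprime_commute)
  then have u: "det A dvd \<Delta> * u - 1" by (simp add: cong_iff_dvd_diff)
  have "[x $ i = (- u * x $ l) * b $ i] (mod det A)" if i: "i < n" for i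
  proof -
    have "det A dvd \<Delta> * x $ i + b $ i * x $ l"
      using left_kernel_relation[OF x ker i] by (simp add: cong_0_iff)
    then have "det A dvd u * (\<Delta> * x $ i + b $ i * x $ l) - x $ i * (\<Delta> * u - 1)"
      using u by (blast intro: dvd_diff dvd_mult)
    also have "\<dots> = x $ i - (- u * x $ l) * b $ i"
      by (simp add: algebra_simps)
    finally show ?thesis by (simp add: cong_iff_dvd_diff)
  qed
  then show ?thesis by blast
qed

lemma left_kernel_unique:
  assumes y: "y \<in> carrier_vec n" and ker: "left_kernel_mod (det A) A y"
    and last: "[y $ l = - \<Delta>] (mod det A)" and i: "i < n"
  shows "[y $ i = b $ i] (mod det A)"
proof (rule cancel_Delta)
  have "det A dvd \<Delta> * y $ i + b $ i * y $ l"
    using left_kernel_relation[OF y ker i] by (simp add: cong_0_iff)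
  moreover have "det A dvd y $ l + \<Delta>"
    using last by (simp add: cong_iff_dvd_diff)
  ultimately have "det A dvd (\<Delta> * y $ i + b $ i * y $ l) - b $ i * (y $ l + \<Delta>)"
    by (intro dvd_diff dvd_mult)
  also have "\<dots> = \<Delta> * y $ i - \<Delta> * b $ i"
    by (simp add: algebra_simps)
  finally show "[\<Delta> * y $ i = \<Delta> * b $ i] (mod det A)"
    by (simp add: cong_iff_dvd_diff)
qed

end

lemma cartan_ext_dims [simp]: "dim_row (cartan_ext d C n) = n" "dim_col (cartan_ext d C n) = n"
  by (simp_all add: cartan_ext_def)

lemma cartan_ext_carrier: "cartan_ext d C n \<in> carrier_mat n n"
  by (simp add: carrier_matI)

lemma root_lattice_eq_image: "root_lattice d C n = (*\<^sub>v) (cartan_ext d C n) ` carrier_vec n"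
proof -
  have lattice_eq: "finsum_vec TYPE(int) n (\<lambda>j. of_int (c j) \<cdot>\<^sub>v simple_root d C n j) {0..<n}
      = cartan_ext d C n *\<^sub>v vec n c" for c
    using finsum_vec_smult_col[OF cartan_ext_carrier] by (simp add: simple_root_def)
  show ?thesis
  proof (rule equalityI; rule subsetI)
    fix v assume "v \<in> root_lattice d C n"
    then show "v \<in> (*\<^sub>v) (cartan_ext d C n) ` carrier_vec n"
      unfolding root_lattice_def using lattice_eq by auto
  next
    fix v assume "v \<in> (*\<^sub>v) (cartan_ext d C n) ` carrier_vec n"
    then obtain x where x: "x \<in> carrier_vec n" and v: "v = cartan_ext d C n *\<^sub>v x" by blast
    have "vec n (vec_index x) = x" using x by auto
    then show "v \<in> root_lattice d C n"
      unfolding root_lattice_def v using lattice_eq[of "vec_index x"]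
      by (auto intro!: exI[of _ "vec_index x"])
  qed
qed

lemma mat_delete_cartan_ext: "mat_delete (cartan_ext d C (Suc k)) k k = cartan_ext d C k"
  by (rule eq_matI) (auto simp: mat_delete_def cartan_ext_def)

lemma cartan_ext_self: "C \<in> carrier_mat d d \<Longrightarrow> cartan_ext d C d = C"
  by (rule eq_matI) (auto simp: cartan_ext_def)

lemma adj_cartan_ext_last: "adj_mat (cartan_ext d C (Suc k)) $$ (k, k) = det_ext d C k"
  by (simp add: adj_mat_def cofactor_def mat_delete_cartan_ext det_ext_def power_add)

lemma cofactor_cartan_ext_subdiag:
  assumes "1 \<le> d" "d \<le> Suc k"
  shows "cofactor (cartan_ext d C (Suc (Suc k))) (Suc k) k = det_ext d C k"
proof -
  define M where "M = mat_delete (cartan_ext d C (Suc (Suc k))) (Suc k) k"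
  have M: "M \<in> carrier_mat (Suc k) (Suc k)"
    unfolding M_def by (simp add: mat_delete_def carrier_matI)
  have minor: "cofactor M k k = det_ext d C k"
  proof -
    have "mat_delete M k k = cartan_ext d C k"
      by (rule eq_matI) (auto simp: M_def mat_delete_def cartan_ext_def)
    then show ?thesis by (simp add: cofactor_def det_ext_def)
  qed
  have "det M = (\<Sum>i<Suc k. M $$ (i, k) * cofactor M i k)"
    by (rule laplace_expansion_column[OF M]) simp
  also have "\<dots> = M $$ (k, k) * cofactor M k k"
  proof -
    have "(\<Sum>i<k. M $$ (i, k) * cofactor M i k) = 0"
      by (rule sum.neutral) (use assms in \<open>auto simp: M_def mat_delete_def cartan_ext_def\<close>)
    then show ?thesis by simp
  qed
  also have "\<dots> = - det_ext d C k"
    using assms minor by (simp add: M_def mat_delete_def cartan_ext_def)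
  finally show ?thesis by (simp add: cofactor_def M_def)
qed

lemma det_ext_Suc_Suc:
  assumes "1 \<le> d" "d \<le> Suc k"
  shows "det_ext d C (Suc (Suc k)) = 2 * det_ext d C (Suc k) - det_ext d C k"
proof -
  define B where "B = cartan_ext d C (Suc (Suc k))"
  have B: "B \<in> carrier_mat (Suc (Suc k)) (Suc (Suc k))"
    unfolding B_def by (rule cartan_ext_carrier)
  have "det B = (\<Sum>j<Suc (Suc k). B $$ (Suc k, j) * cofactor B (Suc k) j)"
    by (rule laplace_expansion_row[OF B]) simp
  also have "\<dots> = B $$ (Suc k, k) * cofactor B (Suc k) k + B $$ (Suc k, Suc k) * cofactor B (Suc k) (Suc k)"
  proof -
    have "(\<Sum>j<k. B $$ (Suc k, j) * cofactor B (Suc k) j) = 0"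
      by (rule sum.neutral) (use assms in \<open>auto simp: B_def cartan_ext_def\<close>)
    then show ?thesis by simp
  qed
  also have "B $$ (Suc k, k) = -1"
    using assms by (simp add: B_def cartan_ext_def)
  also have "B $$ (Suc k, Suc k) = 2"
    using assms by (simp add: B_def cartan_ext_def)
  also have "cofactor B (Suc k) k = det_ext d C k"
    unfolding B_def by (rule cofactor_cartan_ext_subdiag[OF assms])
  also have "cofactor B (Suc k) (Suc k) = det_ext d C (Suc k)"
    by (simp add: B_def cofactor_def mat_delete_cartan_ext det_ext_def power_add)
  finally show ?thesis by (simp add: B_def det_ext_def)
qed

lemma det_ext_Suc_diff:
  assumes "1 \<le> d" "d \<le> Suc k"
  shows "det_ext d C (Suc k) - det_ext d C k = Delta d C"
proof -
  obtain d' where d: "d = Suc d'" using assms(1) by (cases d) auto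
  have "d' \<le> k" using assms(2) d by simp
  then show ?thesis
  proof (induction k rule: dec_induct)
    case base
    then show ?case using det_ext_Suc_Suc[of d d' C] d by (simp add: Delta_def)
  next
    case (step k)
    then show ?case using det_ext_Suc_Suc[of d k C] d by simp
  qed
qed

lemma det_ext_linear:
  assumes "1 \<le> d" "d \<le> k"
  shows "det_ext d C k = det_ext d C d + int (k - d) * Delta d C"
  using assms(2)
proof (induction k rule: dec_induct)
  case base
  then show ?case by simp
next
  case (step k)
  then show ?case
    using det_ext_Suc_diff[of d k C] assms(1) by (simp add: Suc_diff_le algebra_simps)
qed

lemma coprime_det_ext_Delta:
  assumes X: "marked_dynkin d C" and ext: "extensible d C" and n: "d \<le> n"
  shows "coprime (det_ext d C n) (Delta d C)"
proof -
  have d: "1 \<le> d" and C: "C \<in> carrier_mat d d"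
    using X by (auto simp: marked_dynkin_def is_gcm_def)
  have "det_ext d C n = int (n - d) * Delta d C + det C"
    using det_ext_linear[OF d n] cartan_ext_self[OF C] by (simp add: det_ext_def)
  moreover have "coprime (Delta d C) (det C)"
    using ext by (simp add: extensible_def)
  ultimately show ?thesis
    by (simp add: coprime_iff_gcd_eq_1 gcd.commute[of _ "Delta d C"] gcd_add_mult)
qed

theorem lemma3p5:
  fixes d n :: nat and C :: "int mat" and b :: "int vec"
  defines "A \<equiv> cartan_ext d C n"
      and "m \<equiv> det_ext d C n"
      and "\<Delta> \<equiv> Delta d C"
  assumes X: "marked_dynkin d C" and ext: "extensible d C"
      and nd: "n \<ge> d" and m0: "m \<noteq> 0"
      and bdim: "b \<in> carrier_vec n"
      and hb: "\<forall>i<n. cong_Q d C n ((- \<Delta>) \<cdot>\<^sub>v fund_weight n i) ((b $ i) \<cdot>\<^sub>v fund_weight n (n - 1))"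
  shows "(\<forall>j<n. [(transpose_mat A *\<^sub>v b) $ j = 0] (mod m))
     \<and> (\<forall>x \<in> carrier_vec n. (\<forall>j<n. [(transpose_mat A *\<^sub>v x) $ j = 0] (mod m)) \<longrightarrow>
           (\<exists>c::int. \<forall>i<n. [x $ i = c * b $ i] (mod m)))
     \<and> ([b $ (n - 1) = - \<Delta>] (mod m))
     \<and> (\<forall>y \<in> carrier_vec n. (\<forall>j<n. [(transpose_mat A *\<^sub>v y) $ j = 0] (mod m))
           \<and> [y $ (n - 1) = - \<Delta>] (mod m) \<longrightarrow> (\<forall>i<n. [y $ i = b $ i] (mod m)))"
proof -
  have d: "1 \<le> d" using X by (simp add: marked_dynkin_def)
  then obtain k where n: "n = Suc k" using nd by (cases n) auto
  have A: "A \<in> carrier_mat n n" unfolding A_def by (rule cartan_ext_carrier)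
  have m: "det A = m" by (simp add: A_def m_def det_ext_def)
  interpret cyclic_weight_lattice A n "n - 1" \<Delta> b
  proof
    show "coprime (det A) \<Delta>"
      using coprime_det_ext_Delta[OF X ext nd] by (simp add: m \<Delta>_def m_def)
    have "adj_mat A $$ (n - 1, n - 1) = m - \<Delta>"
      using adj_cartan_ext_last[of d C k] det_ext_Suc_diff[of d k C] d nd
      by (simp add: n A_def m_def \<Delta>_def)
    then show "[adj_mat A $$ (n - 1, n - 1) = - \<Delta>] (mod det A)"
      by (simp add: m cong_iff_dvd_diff)
    show "(- \<Delta>) \<cdot>\<^sub>v unit_vec n i - b $ i \<cdot>\<^sub>v unit_vec n (n - 1) \<in> (*\<^sub>v) A ` carrier_vec n"
      if "i < n" for i
      using hb that by (simp add: cong_Q_def root_lattice_eq_image fund_weight_def A_def)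
  qed (use A bdim n in auto)
  have ker_iff: "left_kernel_mod m A x \<longleftrightarrow> (\<forall>j<n. [(transpose_mat A *\<^sub>v x) $ j = 0] (mod m))" for x
    using A by (simp add: left_kernel_mod_def)
  show ?thesis
    using left_kernel_b left_kernel_multiple b_last left_kernel_unique
    unfolding m ker_iff by blast
qed

end
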